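(* Let $V$ be a nonzero finite-dimensional real vector space and let $\mathcal{U}\subset V^*$ be a $\bigvee$-system with multiplicities $h_\alpha$ ($\alpha\in\mathcal{U}$), constant $h_{\mathcal{U}}$ and associated non-degenerate metric $(\cdot,\cdot)$ on $V$, i.e. $\sum_{\alpha\in\mathcal{U}}h_\alpha\,\alpha(x)\alpha(y)=h_{\mathcal{U}}\,(x,y)$ for all $x,y\in V$. Let $\vartheta_s$ be an invariant small orbit of $\mathcal{U}$ with multiplicities $h_w$ ($w\in\vartheta_s$) and constant $h_s$. Let $V^{ext}=V\oplus V^\perp$ with $V^\perp=\mathrm{span}\{n^\vee\}$, equipped with the non-degenerate metric $(z_o+z^\perp,z_o'+z'^\perp)^{ext}=(z_o,z_o')+(z^\perp,z'^\perp)^{ext}$ ($z_o,z_o'\in V$, $z^\perp,z'^\perp\in V^\perp$), where $(n^\vee,n^\vee)^{ext}\neq 0$ is a given number, and let $n\in (V^{ext})^*$ be the covector $n(z)=(n^\vee,z)^{ext}$. Let $\mathcal{U}^{ext}=\mathcal{U}\cup\{\pm(w+n): w\in\vartheta_s\}\cup\{\pm n\}$, where the covectors $\pm(w+n)$ carry multiplicity $h_w$ and $\pm n$ carry multiplicity $h_n$. Then there exists a constant $h_{\mathcal{U}^{ext}}$ such that $$h_{\mathcal{U}^{ext}}\,(x,y)^{ext}=\sum_{\alpha\in\mathcal{U}^{ext}}h_\alpha\,\alpha(x)\alpha(y)\quad\text{for all }x,y\in V^{ext}$$ if and only if $$h_{\mathcal{U}}+2h_s=2\Big\{h_n+\sum_{w\in\vartheta_s}h_w\Big\}(n^\vee,n^\vee)^{ext}.$$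 In that case $h_{\mathcal{U}^{ext}}=h_{\mathcal{U}}+2h_s$.
   Context: Setting: $V$ is a real vector space and $\mathcal{U}\subset V^*$ a finite set of covectors spanning $V^*$, each $\alpha\in\mathcal{U}$ carrying a real number $h_\alpha$ (its multiplicity, possibly negative). A metric $(\cdot,\cdot)$ on $V$ is defined by $\sum_{\alpha\in\mathcal{U}}h_\alpha\alpha(x)\alpha(y)=h_{\mathcal{U}}(x,y)$ for a fixed nonzero constant $h_{\mathcal{U}}$, and is assumed non-degenerate (not necessarily positive definite). It gives an isomorphism $V\to V^*$; write $\alpha^\vee\in V$ for the vector corresponding to $\alpha\in V^*$. $\mathcal{U}$ is a $\bigvee$-system if for each $\alpha\in\mathcal{U}$ and each two-plane $\Pi\subset V^*$ containing $\alpha$ one has $\sum_{\beta\in\Pi\cap\mathcal{U}}h_\beta\,\beta(\alpha^\vee)\beta^\vee=\lambda\,\alpha^\vee$ for some scalar $\lambda$ (depending on $\Pi$ and $\alpha$). A small orbit of $\mathcal{U}$ is a finite set $\vartheta_s\subset V^*$ such that $w_1-w_2\in\mathcal{U}$ for all distinct $w_1,w_2\in\vartheta_s$; it is an invariant small orbit if it comes with multiplicities $h_w$ ($w\in\vartheta_s$) such that $\sum_{w\in\vartheta_s}h_w w(z)^2=h_s(z,z)$ for some constant $h_s$ and $\sum_{w\in\vartheta_s}h_w w(z)=0$, for all $z\in V$. Covectors on $V$ (elements of $\mathcal{U}$ and $\vartheta_s$) are regarded as covectors on $V^{ext}=V\oplus V^\perp$ by letting them vanish on $V^\perp$. *)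

theory Defs
  imports "HOL-Analysis.Analysis"
begin

text \<open>V is modelled by a type 'a :: euclidean_space (finite-dimensional, nonzero real
vector space); its own inner product is irrelevant.\<close>

definition nondegenerate :: "('a::zero \<Rightarrow> 'a \<Rightarrow> real) \<Rightarrow> bool" where
  "nondegenerate B \<longleftrightarrow> (\<forall>x. (\<forall>y. B x y = 0) \<longrightarrow> x = 0)"

definition dual_vec :: "('a \<Rightarrow> 'a \<Rightarrow> real) \<Rightarrow> ('a \<Rightarrow> real) \<Rightarrow> 'a" where
  "dual_vec B \<alpha> = (THE v. \<forall>x. B v x = \<alpha> x)"

definition spans_dual :: "('a::real_vector \<Rightarrow> real) set \<Rightarrow> bool" where
  "spans_dual U \<longleftrightarrow> (\<forall>f. linear f \<longrightarrow> (\<exists>c. \<forall>x. f x = (\<Sum>\<alpha>\<in>U. c \<alpha> * \<alpha> x)))"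

definition lin_indep2 :: "('a::type \<Rightarrow> real) \<Rightarrow> ('a \<Rightarrow> real) \<Rightarrow> bool" where
  "lin_indep2 \<alpha> \<gamma> \<longleftrightarrow> (\<forall>a b. (\<forall>x. a * \<alpha> x + b * \<gamma> x = 0) \<longrightarrow> a = 0 \<and> b = 0)"

text \<open>Every two-plane containing alpha is span{alpha, gamma} for such a gamma.\<close>
definition in_plane :: "('a \<Rightarrow> real) \<Rightarrow> ('a \<Rightarrow> real) \<Rightarrow> ('a \<Rightarrow> real) \<Rightarrow> bool" where
  "in_plane \<alpha> \<gamma> \<beta> \<longleftrightarrow> (\<exists>a b. \<beta> = (\<lambda>x. a * \<alpha> x + b * \<gamma> x))"

definition vee_system ::
  "('a::euclidean_space \<Rightarrow> real) set \<Rightarrow> (('a \<Rightarrow> real) \<Rightarrow> real) \<Rightarrow> real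
     \<Rightarrow> ('a \<Rightarrow> 'a \<Rightarrow> real) \<Rightarrow> bool" where
  "vee_system U h hU B \<longleftrightarrow>
     finite U \<and> (\<forall>\<alpha>\<in>U. linear \<alpha>) \<and> spans_dual U \<and> hU \<noteq> 0 \<and>
     (\<forall>x y. (\<Sum>\<alpha>\<in>U. h \<alpha> * \<alpha> x * \<alpha> y) = hU * B x y) \<and>
     nondegenerate B \<and>
     (\<forall>\<alpha>\<in>U. \<forall>\<gamma>. linear \<gamma> \<and> lin_indep2 \<alpha> \<gamma> \<longrightarrow>
        (\<exists>l. (\<Sum>\<beta>\<in>{\<beta>\<in>U. in_plane \<alpha> \<gamma> \<beta>}.
                 (h \<beta> * \<beta> (dual_vec B \<alpha>)) *\<^sub>R dual_vec B \<beta>) = l *\<^sub>R dual_vec B \<alpha>))"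

definition small_orbit :: "('a \<Rightarrow> real) set \<Rightarrow> ('a \<Rightarrow> real) set \<Rightarrow> bool" where
  "small_orbit U \<theta> \<longleftrightarrow> finite \<theta> \<and>
     (\<forall>w1\<in>\<theta>. \<forall>w2\<in>\<theta>. w1 \<noteq> w2 \<longrightarrow> (\<lambda>x. w1 x - w2 x) \<in> U)"

definition invariant_small_orbit ::
  "('a::real_vector \<Rightarrow> real) set \<Rightarrow> ('a \<Rightarrow> 'a \<Rightarrow> real) \<Rightarrow> ('a \<Rightarrow> real) set
     \<Rightarrow> (('a \<Rightarrow> real) \<Rightarrow> real) \<Rightarrow> real \<Rightarrow> bool" where
  "invariant_small_orbit U B \<theta> hw hs \<longleftrightarrow> small_orbit U \<theta> \<and> (\<forall>w\<in>\<theta>. linear w) \<and>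
     (\<forall>z. (\<Sum>w\<in>\<theta>. hw w * (w z)\<^sup>2) = hs * B z z) \<and>
     (\<forall>z. (\<Sum>w\<in>\<theta>. hw w * w z) = 0)"

text \<open>V^ext = V \<oplus> span{n-check} is modelled as 'a \<times> real, (z, t) meaning z + t n-check.
c is the number (n-check, n-check)^ext.\<close>
definition ext_metric :: "('a \<Rightarrow> 'a \<Rightarrow> real) \<Rightarrow> real \<Rightarrow> 'a \<times> real \<Rightarrow> 'a \<times> real \<Rightarrow> real" where
  "ext_metric B c p q = B (fst p) (fst q) + snd p * snd q * c"

definition nvee :: "'a::zero \<times> real" where "nvee = (0, 1)"

definition ncov :: "('a::zero \<Rightarrow> 'a \<Rightarrow> real) \<Rightarrow> real \<Rightarrow> 'a \<times> real \<Rightarrow> real" where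
  "ncov B c p = ext_metric B c nvee p"

definition ext_cov :: "('a \<Rightarrow> real) \<Rightarrow> 'a \<times> real \<Rightarrow> real" where
  "ext_cov \<alpha> p = \<alpha> (fst p)"

text \<open>The sum over U^ext = U \<union> {\<plusminus>(w+n)} \<union> {\<plusminus>n} of h_alpha alpha(x) alpha(y),
counted as a multiset (each listed covector once).\<close>
definition ext_sum ::
  "('a::zero \<Rightarrow> real) set \<Rightarrow> (('a \<Rightarrow> real) \<Rightarrow> real) \<Rightarrow> ('a \<Rightarrow> 'a \<Rightarrow> real) \<Rightarrow> real
    \<Rightarrow> ('a \<Rightarrow> real) set \<Rightarrow> (('a \<Rightarrow> real) \<Rightarrow> real) \<Rightarrow> real
    \<Rightarrow> 'a \<times> real \<Rightarrow> 'a \<times> real \<Rightarrow> real" where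
  "ext_sum U h B c \<theta> hw hn x y =
     (\<Sum>\<alpha>\<in>U. h \<alpha> * ext_cov \<alpha> x * ext_cov \<alpha> y)
   + (\<Sum>w\<in>\<theta>. hw w * (ext_cov w x + ncov B c x) * (ext_cov w y + ncov B c y)
             + hw w * (- (ext_cov w x + ncov B c x)) * (- (ext_cov w y + ncov B c y)))
   + (hn * ncov B c x * ncov B c y + hn * (- ncov B c x) * (- ncov B c y))"

end

theory Submission
  imports Defs
begin

text \<open>Polarizing the quadratic moment identity of the orbit gives
  \<open>\<Sum>w. h\<^sub>w w(z) w(z') = h\<^sub>s (z,z')\<close>; together with \<open>\<Sum>w. h\<^sub>w w = 0\<close> this makes every cross term
  between \<open>V\<close> and \<open>V\<^sup>\<perp>\<close> in the sum over \<open>\<U>\<^sup>e\<^sup>x\<^sup>t\<close> cancel, so that sum equals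
  \<open>(h\<^sub>\<U> + 2h\<^sub>s)(z,z') + 2c\<^sup>2(h\<^sub>n + \<Sum>w. h\<^sub>w) t t'\<close> on \<open>(z + t n\<^sup>\<or>, z' + t' n\<^sup>\<or>)\<close>, where
  \<open>c = (n\<^sup>\<or>,n\<^sup>\<or>)\<^sup>e\<^sup>x\<^sup>t\<close>. Comparing with \<open>h ((z,z') + c t t')\<close> on \<open>V\<close> and on \<open>V\<^sup>\<perp>\<close> separately gives
  the claim.\<close>

lemma gram_form_eq:
  fixes B :: "'a \<Rightarrow> 'a \<Rightarrow> real"
  assumes "hU \<noteq> 0" and "\<And>x y. (\<Sum>\<alpha>\<in>U. h \<alpha> * \<alpha> x * \<alpha> y) = hU * B x y"
  shows "B = (\<lambda>x y. (\<Sum>\<alpha>\<in>U. h \<alpha> * \<alpha> x * \<alpha> y) / hU)"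
  using assms(1) by (simp add: assms(2) fun_eq_iff)

lemma gram_form_bilinear:
  fixes B :: "'a::real_vector \<Rightarrow> 'a \<Rightarrow> real"
  assumes "\<And>\<alpha>. \<alpha> \<in> U \<Longrightarrow> linear \<alpha>" and "hU \<noteq> 0"
    and "\<And>x y. (\<Sum>\<alpha>\<in>U. h \<alpha> * \<alpha> x * \<alpha> y) = hU * B x y"
  shows "bilinear B"
  unfolding gram_form_eq[OF assms(2,3)] bilinear_def
  by (auto intro!: linearI simp: assms(1) linear_add linear_scale algebra_simps
           sum.distrib sum_distrib_left add_divide_distrib)

lemma gram_form_sym:
  fixes B :: "'a \<Rightarrow> 'a \<Rightarrow> real"
  assumes "hU \<noteq> 0" and "\<And>x y. (\<Sum>\<alpha>\<in>U. h \<alpha> * \<alpha> x * \<alpha> y) = hU * B x y"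
  shows "B x y = B y x"
  unfolding gram_form_eq[OF assms] by (simp add: ac_simps)

lemma polarize_weighted_squares:
  fixes B :: "'a::real_vector \<Rightarrow> 'a \<Rightarrow> real"
  assumes "\<And>w. w \<in> \<theta> \<Longrightarrow> linear w" and "bilinear B" and "\<And>x y. B x y = B y x"
    and "\<And>z. (\<Sum>w\<in>\<theta>. hw w * (w z)\<^sup>2) = hs * B z z"
  shows "(\<Sum>w\<in>\<theta>. hw w * w x * w y) = hs * B x y"
proof -
  have "hs * B (x + y) (x + y) = (\<Sum>w\<in>\<theta>. hw w * (w (x + y))\<^sup>2)"
    using assms(4) by simp
  also have "\<dots> = (\<Sum>w\<in>\<theta>. hw w * (w x)\<^sup>2 + hw w * (w y)\<^sup>2 + 2 * (hw w * w x * w y))"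
    by (rule sum.cong) (simp_all add: assms(1) linear_add algebra_simps power2_eq_square)
  also have "\<dots> = hs * B x x + hs * B y y + 2 * (\<Sum>w\<in>\<theta>. hw w * w x * w y)"
    by (simp add: sum.distrib assms(4) sum_distrib_left)
  finally show ?thesis
    using assms(3)[of x y] by (simp add: bilinear_ladd[OF assms(2)] bilinear_radd[OF assms(2)]
        algebra_simps)
qed

lemma ext_sum_eq:
  assumes "vee_system U h hU B" and "invariant_small_orbit U B \<theta> hw hs"
  shows "ext_sum U h B c \<theta> hw hn (z, t) (z', t') =
      (hU + 2 * hs) * B z z' + 2 * c\<^sup>2 * (hn + (\<Sum>w\<in>\<theta>. hw w)) * t * t'"
proof -
  have lin_U: "\<And>\<alpha>. \<alpha> \<in> U \<Longrightarrow> linear \<alpha>" and hU: "hU \<noteq> 0"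
    and gram: "\<And>x y. (\<Sum>\<alpha>\<in>U. h \<alpha> * \<alpha> x * \<alpha> y) = hU * B x y"
    using assms(1) unfolding vee_system_def by auto
  have lin_\<theta>: "\<And>w. w \<in> \<theta> \<Longrightarrow> linear w"
    and quadratic: "\<And>z. (\<Sum>w\<in>\<theta>. hw w * (w z)\<^sup>2) = hs * B z z"
    and balanced: "\<And>z. (\<Sum>w\<in>\<theta>. hw w * w z) = 0"
    using assms(2) unfolding invariant_small_orbit_def by auto
  have bil: "bilinear B"
    using gram_form_bilinear[OF lin_U hU gram] .
  have cross: "(\<Sum>w\<in>\<theta>. hw w * w z * w z') = hs * B z z'"
    using polarize_weighted_squares[OF lin_\<theta> bil gram_form_sym[OF hU gram] quadratic] .
  have "(\<Sum>w\<in>\<theta>. hw w * (w z + t * c) * (w z' + t' * c)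
                + hw w * - (w z + t * c) * - (w z' + t' * c))
      = (\<Sum>w\<in>\<theta>. 2 * (hw w * w z * w z') + (2 * t' * c) * (hw w * w z)
                + (2 * t * c) * (hw w * w z') + (2 * t * t' * c\<^sup>2) * hw w)"
    by (rule sum.cong) (simp_all add: algebra_simps power2_eq_square)
  also have "\<dots> = 2 * hs * B z z' + 2 * t * t' * c\<^sup>2 * (\<Sum>w\<in>\<theta>. hw w)"
    by (simp add: sum.distrib sum_distrib_left[symmetric] cross balanced)
  finally show ?thesis
    unfolding ext_sum_def ext_cov_def ncov_def ext_metric_def nvee_def
    by (simp add: bilinear_lzero[OF bil] gram) (simp add: algebra_simps power2_eq_square)
qed

lemma nondegenerate_ex_nonzero:
  fixes B :: "'a::euclidean_space \<Rightarrow> 'a \<Rightarrow> real"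
  assumes "nondegenerate B"
  shows "\<exists>x y. B x y \<noteq> 0"
proof -
  obtain b :: 'a where "b \<in> Basis"
    using nonempty_Basis by blast
  then have "b \<noteq> 0"
    by (simp add: nonzero_Basis)
  then show ?thesis
    using assms unfolding nondegenerate_def by blast
qed

lemma orthogonal_sum_multiple_iff:
  fixes B :: "'a \<Rightarrow> 'a \<Rightarrow> real"
  assumes "B x\<^sub>0 y\<^sub>0 \<noteq> 0"
  shows "(\<forall>z t z' t'. k * (B z z' + t * t' * c) = a * B z z' + d * t * t')
         \<longleftrightarrow> k = a \<and> k * c = d"
proof
  assume H: "\<forall>z t z' t'. k * (B z z' + t * t' * c) = a * B z z' + d * t * t'"
  have "k * B x\<^sub>0 y\<^sub>0 = a * B x\<^sub>0 y\<^sub>0"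
    using H[rule_format, where z = x\<^sub>0 and z' = y\<^sub>0 and t = 0 and t' = 0] by simp
  then have "k = a"
    using assms by simp
  moreover have "k * (B x\<^sub>0 y\<^sub>0 + c) = a * B x\<^sub>0 y\<^sub>0 + d"
    using H[rule_format, where z = x\<^sub>0 and z' = y\<^sub>0 and t = 1 and t' = 1] by simp
  ultimately show "k = a \<and> k * c = d"
    by (simp add: distrib_left)
qed (auto simp: algebra_simps)

theorem lemma2p2:
  fixes U \<theta> :: "('a::euclidean_space \<Rightarrow> real) set"
    and h hw :: "('a \<Rightarrow> real) \<Rightarrow> real"
    and hU hs hn c :: real
    and B :: "'a \<Rightarrow> 'a \<Rightarrow> real"
  assumes "vee_system U h hU B"
    and "invariant_small_orbit U B \<theta> hw hs"
    and "c \<noteq> 0"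
  shows "((\<exists>hext. \<forall>x y. hext * ext_metric B c x y = ext_sum U h B c \<theta> hw hn x y)
            \<longleftrightarrow> hU + 2 * hs = 2 * (hn + (\<Sum>w\<in>\<theta>. hw w)) * c)
         \<and> (\<forall>hext. (\<forall>x y. hext * ext_metric B c x y = ext_sum U h B c \<theta> hw hn x y)
                   \<longrightarrow> hext = hU + 2 * hs)"
proof -
  let ?S = "hn + (\<Sum>w\<in>\<theta>. hw w)"
  obtain x\<^sub>0 y\<^sub>0 where B_x\<^sub>0_y\<^sub>0: "B x\<^sub>0 y\<^sub>0 \<noteq> 0"
    using assms(1) nondegenerate_ex_nonzero unfolding vee_system_def by blast
  have compatible_iff: "(\<forall>x y. k * ext_metric B c x y = ext_sum U h B c \<theta> hw hn x y)
      \<longleftrightarrow> k = hU + 2 * hs \<and> k * c = 2 * c\<^sup>2 * ?S" for k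
    using orthogonal_sum_multiple_iff[where B = B and k = k and c = c and a = "hU + 2 * hs"
        and d = "2 * c\<^sup>2 * ?S", OF B_x\<^sub>0_y\<^sub>0]
    by (simp add: ext_metric_def ext_sum_eq[OF assms(1,2)] mult.assoc)
  have "(hU + 2 * hs) * c = 2 * c\<^sup>2 * ?S \<longleftrightarrow> hU + 2 * hs = 2 * ?S * c"
    using assms(3) by (auto simp: power2_eq_square)
  then show ?thesis
    unfolding compatible_iff by blast
qed

end
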